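(* Let $f:\mathbb{R}^n\to\mathbb{R}$ be such that $\nabla f$ is Lipschitz continuous with constant $L$ on an open bounded domain $\mathcal{X}\subset\mathbb{R}^n$ containing $\overline{B}(y^0,\delta)$. Let $q=(n^2+3n)/2$, $n<p<q$, $\delta>0$, and let $\mathcal{Y}=\{y^0,\dots,y^p\}\subset\overline{B}(y^0,\delta)$ be poised in the minimum Frobenius norm sense and $\Lambda$-poised in $\overline{B}(y^0,\delta)$ in the minimum Frobenius norm sense, for some $\Lambda>0$. Let $\delta_{\max}>0$ with $\delta\le\delta_{\max}$. Let $\kappa\ge 0$ and let $\mathrm{m}$ be a relaxed minimum Frobenius norm model, i.e. $\mathrm{m}(x)=\sum_{j=0}^{p}\ell_j(x)\gamma_j$, where $\ell_0,\dots,\ell_p$ are the minimum Frobenius norm Lagrange polynomials of $\mathcal{Y}$ and the real numbers $\gamma_j$ are such that $|\mathrm{m}(y^j)-f(y^j)|\le\kappa\delta^2$ for all $j=0,\dots,p$. Then, for all $x$, \[ \|\nabla^2\mathrm{m}(x)\|\le\Big(\kappa+\frac{L}{2}\Big)\frac{4\Lambda(p+1)\sqrt{2(q+1)}}{c(\delta_{\max})^2}, \] where $c(\delta_{\max})=\min\{1,1/\delta_{\max},1/\delta_{\max}^2\}$.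
   Context: $\overline{B}(x,\delta)$ is the closed Euclidean ball; $\|\cdot\|$ is the Euclidean norm / induced matrix norm, $\|\cdot\|_\infty$ the max norm. Natural basis of quadratic polynomials: $\overline\phi_L(x)=(1,x_1,\dots,x_n)$ and $\overline\phi_Q(x)=(\tfrac12x_1^2,x_1x_2,x_1x_3,\dots,x_1x_n,\tfrac12x_2^2,\dots,x_{n-1}x_n,\tfrac12x_n^2)$; $\overline\phi=(\overline\phi_L,\overline\phi_Q)$ has $q+1$ components. For a list of functions $\phi=(\phi_0,\dots,\phi_r)$, $\mathbf{M}(\phi,\mathcal{Y})$ is the $(p+1)\times(r+1)$ matrix with $(i,k)$ entry $\phi_k(y^i)$. The set $\mathcal{Y}$ is poised in the minimum Frobenius norm sense if the matrix $\begin{bmatrix}\mathbf{M}(\overline\phi_Q,\mathcal{Y})\mathbf{M}(\overline\phi_Q,\mathcal{Y})^T & \mathbf{M}(\overline\phi_L,\mathcal{Y})\\ \mathbf{M}(\overline\phi_L,\mathcal{Y})^T & 0\end{bmatrix}$ is nonsingular. Minimum Frobenius norm Lagrange polynomials: $\ell_j(x)=\alpha_j^T\overline\phi(x)$, $j=0,\dots,p$, where $\alpha_j=((\alpha_j)_L,(\alpha_j)_Q)$ solves $\min\frac12\|\alpha_Q\|^2$ subject to $\mathbf{M}(\overline\phi_L,\mathcal{Y})\alpha_L+\mathbf{M}(\overline\phi_Q,\mathcal{Y})\alpha_Q=e_{j+1}$, with $e_{j+1}$ the $(j+1)$-th canonical vector of $\mathbb{R}^{p+1}$. A poised set $\mathcal{Y}$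 is $\Lambda$-poised in $B\subseteq\mathbb{R}^n$ in the minimum Frobenius norm sense if for every $x\in B$ the solution $\lambda(x)\in\mathbb{R}^{p+1}$ of $\min\frac12\|\mathbf{M}(\overline\phi_Q,\mathcal{Y})^T\lambda-\overline\phi_Q(x)\|^2$ subject to $\mathbf{M}(\overline\phi_L,\mathcal{Y})^T\lambda=\overline\phi_L(x)$ satisfies $\|\lambda(x)\|_\infty\le\Lambda$. *)

theory Defs
  imports "HOL-Analysis.Analysis"
begin

text \<open>Points of R^n are vectors of type real^'n (n = CARD('n)).
 Linear basis phi_L(x) = (1, x_1, ..., x_n) is indexed by 'n option
 (None for the constant 1, Some i for x_i).
 Quadratic basis phi_Q is indexed by the sets S of indices with card S = 1 or 2:
 {i} gives x_i^2/2, {i,j} (i distinct from j) gives x_i x_j.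
 This is the natural basis up to the ordering of its components.\<close>

definition phiL :: "real^'n \<Rightarrow> 'n option \<Rightarrow> real" where
  "phiL x k = (case k of None \<Rightarrow> 1 | Some i \<Rightarrow> x $ i)"

definition QI :: "'n set set" where
  "QI = {S. card S = 1 \<or> card S = 2}"

definition phiQ :: "real^'n \<Rightarrow> 'n set \<Rightarrow> real" where
  "phiQ x S = (if card S = 1 then (\<Prod>i\<in>S. x $ i)^2 / 2 else (\<Prod>i\<in>S. x $ i))"

text \<open>Sample set Y = {y 0, ..., y p}. Entry (i,j) of M(phi_Q,Y) M(phi_Q,Y)^T.\<close>
definition MQQ :: "(nat \<Rightarrow> real^'n) \<Rightarrow> nat \<Rightarrow> nat \<Rightarrow> real" where
  "MQQ y i j = (\<Sum>S\<in>QI. phiQ (y i) S * phiQ (y j) S)"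

text \<open>Poised in the minimum Frobenius norm sense: the square block matrix
 [[M_Q M_Q^T, M_L],[M_L^T, 0]] is nonsingular, i.e. its kernel is trivial.\<close>
definition mfn_poised :: "(nat \<Rightarrow> real^'n) \<Rightarrow> nat \<Rightarrow> bool" where
  "mfn_poised y p \<longleftrightarrow>
     (\<forall>(lam :: nat \<Rightarrow> real) (mu :: 'n option \<Rightarrow> real).
        (\<forall>i\<le>p. (\<Sum>j\<le>p. MQQ y i j * lam j) + (\<Sum>k\<in>UNIV. phiL (y i) k * mu k) = 0)
      \<and> (\<forall>k. (\<Sum>i\<le>p. phiL (y i) k * lam i) = 0)
      \<longrightarrow> (\<forall>i\<le>p. lam i = 0) \<and> (\<forall>k. mu k = 0))"

definition lag_constraint ::
  "(nat \<Rightarrow> real^'n) \<Rightarrow> nat \<Rightarrow> nat \<Rightarrow> ('n option \<Rightarrow> real) \<Rightarrow> ('n set \<Rightarrow> real) \<Rightarrow> bool" where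
  "lag_constraint y p j aL aQ \<longleftrightarrow>
     (\<forall>i\<le>p. (\<Sum>k\<in>UNIV. phiL (y i) k * aL k) + (\<Sum>S\<in>QI. phiQ (y i) S * aQ S)
              = (if i = j then 1 else 0))"

definition mfn_lagrange_coeffs ::
  "(nat \<Rightarrow> real^'n) \<Rightarrow> nat \<Rightarrow> nat \<Rightarrow> ('n option \<Rightarrow> real) \<Rightarrow> ('n set \<Rightarrow> real) \<Rightarrow> bool" where
  "mfn_lagrange_coeffs y p j aL aQ \<longleftrightarrow>
     lag_constraint y p j aL aQ \<and>
     (\<forall>bL bQ. lag_constraint y p j bL bQ \<longrightarrow>
        (\<Sum>S\<in>QI. (aQ S)^2) / 2 \<le> (\<Sum>S\<in>QI. (bQ S)^2) / 2)"

definition qpoly :: "('n option \<Rightarrow> real) \<Rightarrow> ('n set \<Rightarrow> real) \<Rightarrow> real^'n \<Rightarrow> real" where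
  "qpoly aL aQ x = (\<Sum>k\<in>UNIV. aL k * phiL x k) + (\<Sum>S\<in>QI. aQ S * phiQ x S)"

definition lam_constraint :: "(nat \<Rightarrow> real^'n) \<Rightarrow> nat \<Rightarrow> real^'n \<Rightarrow> (nat \<Rightarrow> real) \<Rightarrow> bool" where
  "lam_constraint y p x lam \<longleftrightarrow> (\<forall>k. (\<Sum>i\<le>p. phiL (y i) k * lam i) = phiL x k)"

definition lam_objective :: "(nat \<Rightarrow> real^'n) \<Rightarrow> nat \<Rightarrow> real^'n \<Rightarrow> (nat \<Rightarrow> real) \<Rightarrow> real" where
  "lam_objective y p x lam = (\<Sum>S\<in>QI. ((\<Sum>i\<le>p. phiQ (y i) S * lam i) - phiQ x S)^2) / 2"

definition mfn_lambda :: "(nat \<Rightarrow> real^'n) \<Rightarrow> nat \<Rightarrow> real^'n \<Rightarrow> (nat \<Rightarrow> real) \<Rightarrow> bool" where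
  "mfn_lambda y p x lam \<longleftrightarrow> lam_constraint y p x lam \<and>
     (\<forall>lam'. lam_constraint y p x lam' \<longrightarrow> lam_objective y p x lam \<le> lam_objective y p x lam')"

definition mfn_Lambda_poised :: "(nat \<Rightarrow> real^'n) \<Rightarrow> nat \<Rightarrow> real \<Rightarrow> (real^'n) set \<Rightarrow> bool" where
  "mfn_Lambda_poised y p Lam B \<longleftrightarrow> mfn_poised y p \<and>
     (\<forall>x\<in>B. \<forall>lam. mfn_lambda y p x lam \<longrightarrow> (\<forall>i\<le>p. \<bar>lam i\<bar> \<le> Lam))"

definition is_hessian :: "(real^'n \<Rightarrow> real) \<Rightarrow> real^'n \<Rightarrow> real^'n^'n \<Rightarrow> bool" where
  "is_hessian m x H \<longleftrightarrow> (\<exists>g. (\<forall>z. (m has_derivative (\<lambda>h. g z \<bullet> h)) (at z)) \<and>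
                               (g has_derivative (\<lambda>h. H *v h)) (at x))"

end

theory Submission
  imports Defs
begin

(* The vector (l_0(x), ..., l_p(x)) of minimum Frobenius norm Lagrange polynomials is itself the
   solution lambda(x) of the least-squares problem defining Lambda-poisedness, because the minimum
   Frobenius norm interpolant depends linearly on the data and is characterised by interpolation
   plus orthogonality of its quadratic part to the interpolation kernel.  Hence |l_j| <= Lambda on
   the ball, and a second difference across the ball bounds the quadratic part of each l_j by
   2 Lambda / delta^2.  Since affine data are reproduced exactly, the Hessian of m only sees the
   residuals of the gamma_j against the first-order Taylor polynomial of f at y^0, which are at
   most (kappa + L/2) delta^2.  This gives ||Hessian m|| <= 4 Lambda (p+1) (kappa + L/2), already
   below the stated bound since sqrt(2(q+1)) / c(delta_max)^2 >= 1. *)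

section \<open>Minimum Frobenius norm interpolation\<close>

lemma finite_QI: "finite (QI :: 'n::finite set set)"
  by (rule finite_subset[of _ UNIV]) auto

definition coeff_comb :: "(nat \<Rightarrow> 'a \<Rightarrow> real) \<Rightarrow> nat \<Rightarrow> (nat \<Rightarrow> real) \<Rightarrow> 'a \<Rightarrow> real" where
  "coeff_comb a p u k = (\<Sum>j\<le>p. u j * a j k)"

lemma qpoly_cong:
  "bL = cL \<Longrightarrow> (\<And>S. S \<in> QI \<Longrightarrow> bQ S = cQ S) \<Longrightarrow> qpoly bL bQ x = qpoly cL cQ x"
  unfolding qpoly_def by simp

lemma qpoly_add_scaled:
  "qpoly (\<lambda>k. aL k + t * dL k) (\<lambda>S. aQ S + t * dQ S) x = qpoly aL aQ x + t * qpoly dL dQ x"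
  unfolding qpoly_def by (simp add: algebra_simps sum.distrib sum_distrib_left)

lemma qpoly_diff:
  "qpoly (\<lambda>k. bL k - cL k) (\<lambda>S. bQ S - cQ S) x = qpoly bL bQ x - qpoly cL cQ x"
  unfolding qpoly_def by (simp add: algebra_simps sum_subtractf)

lemma qpoly_coeff_comb:
  "qpoly (coeff_comb aL p u) (coeff_comb aQ p u) x = (\<Sum>j\<le>p. u j * qpoly (aL j) (aQ j) x)"
  unfolding qpoly_def coeff_comb_def
  by (simp add: sum_distrib_left sum_distrib_right sum.distrib sum.swap[of _ UNIV]
      sum.swap[of _ QI] algebra_simps)

lemma phiL_as_qpoly: "phiL x k = qpoly (\<lambda>k'. if k' = k then 1 else 0) (\<lambda>_. 0) x"
  unfolding qpoly_def by (simp add: if_distrib[of "\<lambda>a. a * _"] cong: if_cong)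

lemma lag_constraint_iff:
  "lag_constraint y p j aL aQ \<longleftrightarrow> (\<forall>i\<le>p. qpoly aL aQ (y i) = (if i = j then 1 else 0))"
  unfolding lag_constraint_def qpoly_def by (simp add: mult.commute)

lemma mfn_poised_affine_injective:
  assumes "mfn_poised y p" "\<forall>i\<le>p. qpoly \<mu> (\<lambda>_. 0) (y i) = 0"
  shows "\<mu> = (\<lambda>_. 0)"
proof -
  have "(\<forall>i\<le>p. (\<Sum>j\<le>p. MQQ y i j * 0) + (\<Sum>k\<in>UNIV. phiL (y i) k * \<mu> k) = 0)
      \<and> (\<forall>k. (\<Sum>i\<le>p. phiL (y i) k * 0) = 0)"
    using assms(2) by (simp add: qpoly_def mult.commute)
  with assms(1) show ?thesis
    unfolding mfn_poised_def by (blast dest: spec[of _ "\<lambda>_. 0"])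
qed

lemma linear_quadratic_nonneg_imp_zero:
  fixes a b :: real
  assumes "\<And>t. 0 \<le> t * b + t^2 * a"
  shows "b = 0"
proof -
  define s where "s = \<bar>a\<bar> + 1"
  have s: "s > 0" "\<bar>a\<bar> < s" unfolding s_def by auto
  have "0 \<le> (- b / s) * b + (- b / s)^2 * a" by (rule assms)
  also have "\<dots> \<le> - (b^2) / s + b^2 / s^2 * \<bar>a\<bar>"
    by (auto simp: power2_eq_square power_divide intro!: divide_right_mono mult_left_mono)
  also have "\<dots> = - (b^2) / s^2 * (s - \<bar>a\<bar>)"
    using s by (simp add: field_simps power2_eq_square)
  finally have "b^2 * (s - \<bar>a\<bar>) \<le> 0"
    using s by (simp add: field_simps)
  with s show ?thesis
    by (metis diff_gt_0_iff_gt mult_le_0_iff not_le zero_less_power2)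
qed

lemma mfn_lagrange_coeffs_orthogonal:
  assumes opt: "mfn_lagrange_coeffs y p j aL aQ"
    and ker: "\<forall>i\<le>p. qpoly dL dQ (y i) = 0"
  shows "(\<Sum>S\<in>QI. aQ S * dQ S) = 0"
proof -
  have "2 * (\<Sum>S\<in>QI. aQ S * dQ S) = 0"
  proof (rule linear_quadratic_nonneg_imp_zero)
    fix t :: real
    have "lag_constraint y p j (\<lambda>k. aL k + t * dL k) (\<lambda>S. aQ S + t * dQ S)"
      using opt ker unfolding mfn_lagrange_coeffs_def lag_constraint_iff qpoly_add_scaled by simp
    with opt have "(\<Sum>S\<in>QI. (aQ S)^2) \<le> (\<Sum>S\<in>QI. (aQ S + t * dQ S)^2)"
      unfolding mfn_lagrange_coeffs_def by auto
    also have "\<dots> = (\<Sum>S\<in>QI. (aQ S)^2) + t * (2 * (\<Sum>S\<in>QI. aQ S * dQ S)) + t^2 * (\<Sum>S\<in>QI. (dQ S)^2)"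
      by (simp add: power2_sum sum.distrib sum_distrib_left algebra_simps power_mult_distrib)
    finally show "0 \<le> t * (2 * (\<Sum>S\<in>QI. aQ S * dQ S)) + t^2 * (\<Sum>S\<in>QI. (dQ S)^2)"
      by simp
  qed
  then show ?thesis by simp
qed

lemma mfn_lagrange_interpolates:
  assumes lag: "\<forall>j\<le>p. mfn_lagrange_coeffs y p j (aL j) (aQ j)" and "i \<le> p" "j \<le> p"
  shows "qpoly (aL j) (aQ j) (y i) = (if i = j then 1 else 0)"
  using assms unfolding mfn_lagrange_coeffs_def lag_constraint_iff by simp

lemma qpoly_coeff_comb_interpolates:
  assumes lag: "\<forall>j\<le>p. mfn_lagrange_coeffs y p j (aL j) (aQ j)" and i: "i \<le> p"
  shows "qpoly (coeff_comb aL p u) (coeff_comb aQ p u) (y i) = u i"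
proof -
  have "qpoly (coeff_comb aL p u) (coeff_comb aQ p u) (y i) = (\<Sum>j\<le>p. if i = j then u j else 0)"
    unfolding qpoly_coeff_comb using mfn_lagrange_interpolates[OF lag i] by (intro sum.cong) auto
  also have "\<dots> = u i" using i by simp
  finally show ?thesis .
qed

lemma sum_mfn_lagrange_interpolates:
  assumes lag: "\<forall>j\<le>p. mfn_lagrange_coeffs y p j (aL j) (aQ j)" and i: "i \<le> p"
  shows "(\<Sum>j\<le>p. qpoly (aL j) (aQ j) (y i) * u j) = u i"
  using qpoly_coeff_comb_interpolates[OF lag i, of u] by (simp add: qpoly_coeff_comb mult.commute)

lemma coeff_comb_orthogonal:
  assumes lag: "\<forall>j\<le>p. mfn_lagrange_coeffs y p j (aL j) (aQ j)"
    and ker: "\<forall>i\<le>p. qpoly dL dQ (y i) = 0"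
  shows "(\<Sum>S\<in>QI. coeff_comb aQ p u S * dQ S) = 0"
proof -
  have "(\<Sum>S\<in>QI. coeff_comb aQ p u S * dQ S) = (\<Sum>j\<le>p. u j * (\<Sum>S\<in>QI. aQ j S * dQ S))"
    unfolding coeff_comb_def
    by (simp add: sum_distrib_left sum_distrib_right sum.swap[of _ QI] algebra_simps)
  also have "\<dots> = 0"
    using mfn_lagrange_coeffs_orthogonal[OF _ ker] lag by (intro sum.neutral) auto
  finally show ?thesis .
qed

lemma mfn_interpolant_unique:
  assumes lag: "\<forall>j\<le>p. mfn_lagrange_coeffs y p j (aL j) (aQ j)"
    and poised: "mfn_poised y p"
    and interp: "\<forall>i\<le>p. qpoly bL bQ (y i) = u i"
    and orth: "\<And>dL dQ. \<forall>i\<le>p. qpoly dL dQ (y i) = 0 \<Longrightarrow> (\<Sum>S\<in>QI. bQ S * dQ S) = 0"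
  shows "bL = coeff_comb aL p u" and "\<forall>S\<in>QI. bQ S = coeff_comb aQ p u S"
proof -
  define dL where "dL = (\<lambda>k. bL k - coeff_comb aL p u k)"
  define dQ where "dQ = (\<lambda>S. bQ S - coeff_comb aQ p u S)"
  have ker: "\<forall>i\<le>p. qpoly dL dQ (y i) = 0"
    unfolding dL_def dQ_def qpoly_diff using interp qpoly_coeff_comb_interpolates[OF lag] by simp
  have "(\<Sum>S\<in>QI. (dQ S)^2) = (\<Sum>S\<in>QI. bQ S * dQ S) - (\<Sum>S\<in>QI. coeff_comb aQ p u S * dQ S)"
    unfolding sum_subtractf[symmetric]
    by (intro sum.cong) (simp_all add: dQ_def power2_eq_square algebra_simps)
  also have "\<dots> = 0"
    using orth[OF ker] coeff_comb_orthogonal[OF lag ker] by simp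
  finally have dQ0: "\<forall>S\<in>QI. dQ S = 0"
    using finite_QI by (simp add: sum_nonneg_eq_0_iff)
  then show "\<forall>S\<in>QI. bQ S = coeff_comb aQ p u S"
    unfolding dQ_def by simp
  have "\<forall>i\<le>p. qpoly dL (\<lambda>_. 0) (y i) = 0"
    using ker qpoly_cong[of dL dL dQ "\<lambda>_. 0"] dQ0 by simp
  then have "dL = (\<lambda>_. 0)"
    by (rule mfn_poised_affine_injective[OF poised])
  then show "bL = coeff_comb aL p u"
    unfolding dL_def by (simp add: fun_eq_iff)
qed

lemma mfn_lagrange_reproduces_affine:
  assumes lag: "\<forall>j\<le>p. mfn_lagrange_coeffs y p j (aL j) (aQ j)"
    and poised: "mfn_poised y p"
  shows "coeff_comb aL p (\<lambda>i. qpoly bL (\<lambda>_. 0) (y i)) = bL"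
    and "\<forall>S\<in>QI. coeff_comb aQ p (\<lambda>i. qpoly bL (\<lambda>_. 0) (y i)) S = 0"
  using mfn_interpolant_unique[OF lag poised, of bL "\<lambda>_. 0"] by auto

lemma sum_mfn_lagrange_affine:
  assumes lag: "\<forall>j\<le>p. mfn_lagrange_coeffs y p j (aL j) (aQ j)"
    and poised: "mfn_poised y p"
  shows "(\<Sum>i\<le>p. qpoly bL (\<lambda>_. 0) (y i) * qpoly (aL i) (aQ i) x) = qpoly bL (\<lambda>_. 0) x"
  using mfn_lagrange_reproduces_affine[OF lag poised, of bL]
  by (simp add: qpoly_coeff_comb[symmetric] cong: qpoly_cong)

lemma mfn_lagrange_residual_orthogonal:
  assumes lag: "\<forall>j\<le>p. mfn_lagrange_coeffs y p j (aL j) (aQ j)"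
    and poised: "mfn_poised y p"
    and d: "\<And>k. (\<Sum>i\<le>p. phiL (y i) k * d i) = 0"
  shows "(\<Sum>S\<in>QI. ((\<Sum>i\<le>p. phiQ (y i) S * qpoly (aL i) (aQ i) x) - phiQ x S)
                   * (\<Sum>i\<le>p. phiQ (y i) S * d i)) = 0"
proof -
  define v where "v S = (\<Sum>i\<le>p. phiQ (y i) S * d i)" for S
  define u where "u i = qpoly (\<lambda>_. 0) v (y i)" for i
  have "(\<Sum>S\<in>QI. v S * dQ S) = 0" if ker: "\<forall>i\<le>p. qpoly dL dQ (y i) = 0" for dL dQ
  proof -
    have "(\<Sum>S\<in>QI. v S * dQ S) = (\<Sum>i\<le>p. d i * (\<Sum>S\<in>QI. dQ S * phiQ (y i) S))"
      unfolding v_def sum_distrib_left sum_distrib_right by (subst sum.swap) (simp add: mult_ac)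
    also have "\<dots> = - (\<Sum>i\<le>p. d i * (\<Sum>k\<in>UNIV. dL k * phiL (y i) k))"
      unfolding sum_negf[symmetric]
    proof (intro sum.cong refl)
      fix i assume "i \<in> {..p}"
      then have "(\<Sum>k\<in>UNIV. dL k * phiL (y i) k) + (\<Sum>S\<in>QI. dQ S * phiQ (y i) S) = 0"
        using ker by (simp add: qpoly_def)
      then have "(\<Sum>S\<in>QI. dQ S * phiQ (y i) S) = - (\<Sum>k\<in>UNIV. dL k * phiL (y i) k)"
        by linarith
      then show "d i * (\<Sum>S\<in>QI. dQ S * phiQ (y i) S) = - (d i * (\<Sum>k\<in>UNIV. dL k * phiL (y i) k))"
        by simp
    qed
    also have "\<dots> = - (\<Sum>k\<in>UNIV. dL k * (\<Sum>i\<le>p. phiL (y i) k * d i))"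
      unfolding sum_distrib_left by (subst sum.swap) (simp add: mult_ac)
    finally show ?thesis by (simp add: d)
  qed
  \<comment> \<open>(0, v) interpolates its own values u and is orthogonal to the kernel, so it is the
    Lagrange combination of u.\<close>
  then have "coeff_comb aL p u = (\<lambda>_. 0)" and "\<forall>S\<in>QI. coeff_comb aQ p u S = v S"
    using mfn_interpolant_unique[OF lag poised, of "\<lambda>_. 0" v u] unfolding u_def by auto
  then have "qpoly (coeff_comb aL p u) (coeff_comb aQ p u) x = qpoly (\<lambda>_. 0) v x"
    by (intro qpoly_cong) auto
  then have "(\<Sum>i\<le>p. u i * qpoly (aL i) (aQ i) x) = (\<Sum>S\<in>QI. v S * phiQ x S)"
    unfolding qpoly_coeff_comb[symmetric] by (simp add: qpoly_def)
  moreover have "(\<Sum>i\<le>p. u i * qpoly (aL i) (aQ i) x)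
      = (\<Sum>S\<in>QI. (\<Sum>i\<le>p. phiQ (y i) S * qpoly (aL i) (aQ i) x) * v S)"
    unfolding u_def qpoly_def[of "\<lambda>_. 0"]
    by (simp add: sum_distrib_left sum_distrib_right mult_ac sum.swap[of _ QI])
  ultimately show ?thesis
    unfolding v_def[symmetric] left_diff_distrib sum_subtractf by (simp add: mult.commute)
qed

lemma sum_square_add_orthogonal:
  fixes a v :: "'a \<Rightarrow> real"
  assumes "(\<Sum>S\<in>A. a S * v S) = 0"
  shows "(\<Sum>S\<in>A. (a S + v S)^2) = (\<Sum>S\<in>A. (a S)^2) + (\<Sum>S\<in>A. (v S)^2)"
  using assms by (simp add: power2_sum sum.distrib mult.assoc flip: sum_distrib_left)

lemma mfn_lagrange_is_lambda:
  assumes lag: "\<forall>j\<le>p. mfn_lagrange_coeffs y p j (aL j) (aQ j)"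
    and poised: "mfn_poised y p"
  shows "mfn_lambda y p x (\<lambda>i. qpoly (aL i) (aQ i) x)"
proof -
  let ?l = "\<lambda>i. qpoly (aL i) (aQ i) x"
  have cons: "lam_constraint y p x ?l"
    unfolding lam_constraint_def phiL_as_qpoly
    by (intro allI sum_mfn_lagrange_affine[OF lag poised])
  have "lam_objective y p x ?l \<le> lam_objective y p x lam" if "lam_constraint y p x lam" for lam
  proof -
    define d where "d i = lam i - ?l i" for i
    have d: "(\<Sum>i\<le>p. phiL (y i) k * d i) = 0" for k
      using that cons by (simp add: lam_constraint_def d_def right_diff_distrib sum_subtractf)
    have split: "(\<Sum>i\<le>p. phiQ (y i) S * lam i) - phiQ x S
        = ((\<Sum>i\<le>p. phiQ (y i) S * ?l i) - phiQ x S) + (\<Sum>i\<le>p. phiQ (y i) S * d i)" for S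
      by (simp add: d_def right_diff_distrib sum_subtractf)
    show ?thesis
      unfolding lam_objective_def split
        sum_square_add_orthogonal[OF mfn_lagrange_residual_orthogonal[OF lag poised d]]
      by (simp add: sum_nonneg)
  qed
  with cons show ?thesis
    unfolding mfn_lambda_def by blast
qed

lemma mfn_lagrange_bounded:
  assumes lag: "\<forall>j\<le>p. mfn_lagrange_coeffs y p j (aL j) (aQ j)"
    and "mfn_Lambda_poised y p \<Lambda> B" "x \<in> B" "j \<le> p"
  shows "\<bar>qpoly (aL j) (aQ j) x\<bar> \<le> \<Lambda>"
  using assms mfn_lagrange_is_lambda[OF lag] unfolding mfn_Lambda_poised_def by blast

section \<open>Quadratic part and Hessian\<close>

definition quad_form :: "('n set \<Rightarrow> real) \<Rightarrow> real^'n \<Rightarrow> real" where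
  "quad_form w z = (\<Sum>S\<in>QI. w S * phiQ z S)"

lemma qpoly_eq_affine_plus_quad_form:
  "qpoly bL bQ z = bL None + (\<chi> i. bL (Some i)) \<bullet> z + quad_form bQ z"
  by (simp add: qpoly_def quad_form_def phiL_def UNIV_option_conv sum.reindex inner_vec_def
      mult.commute)

lemma phiQ_product:
  assumes "S \<in> QI"
  shows "\<exists>a b c. \<forall>z::real^'n. phiQ z S = c * (z $ a * z $ b)"
proof -
  have "card S = 1 \<or> card S = 2"
    using assms unfolding QI_def by simp
  then show ?thesis
  proof
    assume "card S = 1"
    then obtain i where "S = {i}"
      by (rule card_1_singletonE)
    then show ?thesis
      by (intro exI[of _ i] exI[of _ "1/2"]) (simp add: phiQ_def power2_eq_square)
  next
    assume "card S = 2"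
    then obtain i j where "S = {i, j}" "i \<noteq> j"
      by (auto simp: card_2_iff)
    then show ?thesis
      by (intro exI[of _ i] exI[of _ j] exI[of _ 1]) (simp add: phiQ_def)
  qed
qed

lemma phiQ_parallelogram:
  assumes "S \<in> QI"
  shows "phiQ (c + e) S + phiQ (c - e) S = 2 * phiQ c S + 2 * phiQ e S"
  using phiQ_product[OF assms] by (auto simp: algebra_simps)

lemma phiQ_scaleR:
  assumes "S \<in> QI"
  shows "phiQ (t *\<^sub>R v) S = t^2 * phiQ v S"
  using phiQ_product[OF assms] by (auto simp: algebra_simps power2_eq_square)

lemma quad_form_scaleR: "quad_form w (t *\<^sub>R v) = t^2 * quad_form w v"
  unfolding quad_form_def sum_distrib_left by (intro sum.cong) (simp_all add: phiQ_scaleR)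

lemma quad_form_coeff_comb: "quad_form (coeff_comb aQ p u) v = (\<Sum>j\<le>p. u j * quad_form (aQ j) v)"
  unfolding quad_form_def coeff_comb_def sum_distrib_left sum_distrib_right
  by (subst sum.swap) (simp add: mult_ac)

lemma qpoly_second_difference:
  "qpoly bL bQ (c + e) + qpoly bL bQ (c - e) - 2 * qpoly bL bQ c = 2 * quad_form bQ e"
proof -
  have "quad_form bQ (c + e) + quad_form bQ (c - e)
      = (\<Sum>S\<in>QI. bQ S * (phiQ (c + e) S + phiQ (c - e) S))"
    by (simp add: quad_form_def distrib_left sum.distrib)
  also have "\<dots> = (\<Sum>S\<in>QI. bQ S * (2 * phiQ c S + 2 * phiQ e S))"
    by (intro sum.cong refl) (simp add: phiQ_parallelogram)
  also have "\<dots> = 2 * quad_form bQ c + 2 * quad_form bQ e"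
    by (simp add: quad_form_def distrib_left sum.distrib sum_distrib_left mult_ac)
  finally have "quad_form bQ (c + e) + quad_form bQ (c - e)
      = 2 * quad_form bQ c + 2 * quad_form bQ e" .
  then show ?thesis
    unfolding qpoly_eq_affine_plus_quad_form
    by (simp add: algebra_simps inner_add_right inner_diff_right)
qed

lemma quad_form_bilinear:
  fixes w :: "'n::finite set \<Rightarrow> real"
  shows "\<exists>B. bilinear B \<and> (\<forall>z. quad_form w z = B z z)"
proof -
  have "\<forall>S. \<exists>a b c. S \<in> QI \<longrightarrow> (\<forall>z::real^'n. phiQ z S = c * (z $ a * z $ b))"
    using phiQ_product by blast
  then obtain a where "\<forall>S. \<exists>b c. S \<in> QI \<longrightarrow> (\<forall>z::real^'n. phiQ z S = c * (z $ a S * z $ b))"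
    by (metis choice)
  then obtain b where "\<forall>S. \<exists>c. S \<in> QI \<longrightarrow> (\<forall>z::real^'n. phiQ z S = c * (z $ a S * z $ b S))"
    by (metis choice)
  then obtain c where abc: "\<And>S z. S \<in> QI \<Longrightarrow> phiQ z S = c S * (z $ a S * z $ b S)"
    by (metis choice)
  define B where "B z z' = (\<Sum>S\<in>QI. w S * c S * (z $ a S * z' $ b S))" for z z' :: "real^'n"
  have "bilinear B"
    unfolding bilinear_def B_def linear_iff
    by (simp add: algebra_simps sum.distrib sum_distrib_left)
  moreover have "quad_form w z = B z z" for z
    unfolding quad_form_def B_def by (intro sum.cong) (simp_all add: abc)
  ultimately show ?thesis by blast
qed

lemma onorm_le_symmetric:
  fixes f :: "'a::{real_inner, perfect_space} \<Rightarrow> 'a"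
  assumes lin: "linear f"
    and sym: "\<And>v w. f v \<bullet> w = f w \<bullet> v"
    and bound: "\<And>v. \<bar>f v \<bullet> v\<bar> \<le> M * (norm v)^2"
  shows "onorm f \<le> M"
proof (rule onorm_le)
  have polar: "4 * (f a \<bullet> b) \<le> 2 * M * ((norm a)^2 + (norm b)^2)" for a b
  proof -
    have "4 * (f a \<bullet> b) = f (a + b) \<bullet> (a + b) - f (a - b) \<bullet> (a - b)"
      using sym[of b a] by (simp add: linear_add[OF lin] linear_diff[OF lin] algebra_simps
          inner_add_left inner_add_right inner_diff_left inner_diff_right)
    also have "\<dots> \<le> M * (norm (a + b))^2 + M * (norm (a - b))^2"
      using bound[of "a + b"] bound[of "a - b"] by linarith
    also have "\<dots> = 2 * M * ((norm a)^2 + (norm b)^2)"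
      by (simp add: power2_norm_eq_inner inner_add_left inner_add_right inner_diff_left
          inner_diff_right inner_commute algebra_simps)
    finally show ?thesis .
  qed
  fix v
  show "norm (f v) \<le> M * norm v"
  proof (cases "f v = 0")
    case True
    show ?thesis
    proof (cases "v = 0")
      case False
      then have "0 \<le> M * (norm v)^2" using bound[of v] True by simp
      with False have "M \<ge> 0" by (simp add: zero_le_mult_iff)
      with True show ?thesis by simp
    qed (simp add: linear_0[OF lin])
  next
    case False
    define b where "b = (norm v / norm (f v)) *\<^sub>R f v"
    have "f v \<bullet> b = norm v * norm (f v)"
      using False by (simp add: b_def power2_eq_square flip: power2_norm_eq_inner)
    moreover have "norm b = norm v"
      using False by (simp add: b_def)
    ultimately have "4 * (norm v * norm (f v)) \<le> 4 * (norm v * (M * norm v))"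
      using polar[of v b] by (simp add: inner_commute power2_eq_square algebra_simps)
    moreover have "v \<noteq> 0"
      using False linear_0[OF lin] by auto
    ultimately show ?thesis by simp
  qed
qed

lemma is_hessian_affine_plus_bilinear:
  fixes B :: "real^'n \<Rightarrow> real^'n \<Rightarrow> real"
  assumes B: "bilinear B" and hess: "is_hessian (\<lambda>z. c + l \<bullet> z + B z z) x H"
  shows "(H *v h) \<bullet> w = B h w + B w h"
proof -
  interpret B: bounded_bilinear B
    using B bilinear_conv_bounded_bilinear by blast
  obtain g where g: "\<And>z. ((\<lambda>z. c + l \<bullet> z + B z z) has_derivative (\<lambda>h. g z \<bullet> h)) (at z)"
    and gH: "(g has_derivative (\<lambda>h. H *v h)) (at x)"
    using hess unfolding is_hessian_def by blast
  have "((\<lambda>z. c + l \<bullet> z + B z z) has_derivative (\<lambda>h. 0 + l \<bullet> h + (B z h + B h z))) (at z)" for z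
    by (intro has_derivative_add has_derivative_const has_derivative_inner_right B.FDERIV
        has_derivative_ident)
  then have "(\<lambda>h. g z \<bullet> h) = (\<lambda>h. 0 + l \<bullet> h + (B z h + B h z))" for z
    using g by (rule has_derivative_unique[rotated])
  then have "g z \<bullet> h = l \<bullet> h + (B z h + B h z)" for z h
    using fun_cong by fastforce
  then have grad: "(\<lambda>z. g z \<bullet> w) = (\<lambda>z. l \<bullet> w + (B z w + B w z))"
    by simp
  have "((\<lambda>z. g z \<bullet> w) has_derivative (\<lambda>h. (H *v h) \<bullet> w)) (at x)"
    using gH by (rule has_derivative_inner_left)
  moreover have "((\<lambda>z. g z \<bullet> w) has_derivative (\<lambda>h. 0 + (B h w + B w h))) (at x)"
    unfolding grad
    by (intro has_derivative_add has_derivative_const has_derivative_ident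
        bounded_linear.has_derivative[OF B.bounded_linear_left]
        bounded_linear.has_derivative[OF B.bounded_linear_right])
  ultimately have "(\<lambda>h. (H *v h) \<bullet> w) = (\<lambda>h. 0 + (B h w + B w h))"
    by (rule has_derivative_unique)
  then show ?thesis
    using fun_cong by fastforce
qed

lemma onorm_hessian_qpoly_le:
  assumes hess: "is_hessian (qpoly bL bQ) x H"
    and bound: "\<And>v. \<bar>quad_form bQ v\<bar> \<le> K * (norm v)^2"
  shows "onorm (\<lambda>v. H *v v) \<le> 2 * K"
proof -
  obtain B where B: "bilinear B" and Q: "\<And>z. quad_form bQ z = B z z"
    using quad_form_bilinear by blast
  have "qpoly bL bQ = (\<lambda>z. bL None + (\<chi> i. bL (Some i)) \<bullet> z + B z z)"
    by (simp add: fun_eq_iff qpoly_eq_affine_plus_quad_form Q)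
  then have H: "(H *v h) \<bullet> w = B h w + B w h" for h w
    using hess by (intro is_hessian_affine_plus_bilinear[OF B]) simp
  show ?thesis
  proof (rule onorm_le_symmetric)
    show "linear ((*v) H)" by (rule matrix_vector_mul_linear)
    show "(H *v v) \<bullet> w = (H *v w) \<bullet> v" for v w
      unfolding H by simp
    show "\<bar>(H *v v) \<bullet> v\<bar> \<le> 2 * K * (norm v)^2" for v
      using bound[of v] unfolding H Q by simp
  qed
qed

lemma quad_form_bound_on_ball:
  assumes \<delta>: "\<delta> > 0" and bound: "\<And>z. z \<in> cball c \<delta> \<Longrightarrow> \<bar>qpoly bL bQ z\<bar> \<le> M"
  shows "\<bar>quad_form bQ v\<bar> \<le> 2 * M / \<delta>^2 * (norm v)^2"
proof (cases "v = 0")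
  case True
  then show ?thesis
    using quad_form_scaleR[of bQ 0 v] by simp
next
  case False
  define t where "t = \<delta> / norm v"
  have t: "t > 0" "t^2 * (norm v)^2 = \<delta>^2"
    using False \<delta> by (simp_all add: t_def power_divide)
  have "norm (t *\<^sub>R v) = \<delta>"
    using \<delta> False by (simp add: t_def)
  then have "c + t *\<^sub>R v \<in> cball c \<delta>" "c - t *\<^sub>R v \<in> cball c \<delta>" "c \<in> cball c \<delta>"
    using \<delta> by (auto simp: dist_norm)
  then have "\<bar>2 * quad_form bQ (t *\<^sub>R v)\<bar> \<le> 4 * M"
    unfolding qpoly_second_difference[of bL bQ c, symmetric] by (smt (verit) bound)
  then have "t^2 * \<bar>quad_form bQ v\<bar> \<le> 2 * M"
    by (simp add: quad_form_scaleR abs_mult mult.commute)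
  from mult_right_mono[OF this zero_le_power2[of "norm v"]]
  have "\<delta>^2 * \<bar>quad_form bQ v\<bar> \<le> 2 * M * (norm v)^2"
    unfolding t(2)[symmetric] by (simp add: mult_ac)
  then show ?thesis
    using \<delta> by (simp add: field_simps)
qed

lemma mfn_model_quad_form_bound:
  assumes lag: "\<forall>j\<le>p. mfn_lagrange_coeffs y p j (aL j) (aQ j)"
    and LP: "mfn_Lambda_poised y p \<Lambda> (cball c \<delta>)" and \<delta>: "\<delta> > 0"
    and close: "\<forall>j\<le>p. \<bar>\<gamma> j - (a0 + g \<bullet> y j)\<bar> \<le> \<epsilon>"
  shows "\<bar>quad_form (coeff_comb aQ p \<gamma>) v\<bar> \<le> 2 * \<Lambda> * real (p + 1) * \<epsilon> / \<delta>^2 * (norm v)^2"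
proof -
  have poised: "mfn_poised y p"
    using LP unfolding mfn_Lambda_poised_def by simp
  define bL where "bL k = (case k of None \<Rightarrow> a0 | Some i \<Rightarrow> g $ i)" for k
  have affine: "qpoly bL (\<lambda>_. 0) z = a0 + g \<bullet> z" for z
    by (simp add: qpoly_eq_affine_plus_quad_form quad_form_def bL_def)
  define r where "r j = \<gamma> j - (a0 + g \<bullet> y j)" for j
  have "coeff_comb aQ p \<gamma> S = coeff_comb aQ p r S" if "S \<in> QI" for S
    using mfn_lagrange_reproduces_affine(2)[OF lag poised, of bL] that
    by (simp add: affine r_def coeff_comb_def algebra_simps sum_subtractf)
  then have "quad_form (coeff_comb aQ p \<gamma>) v = quad_form (coeff_comb aQ p r) v"
    unfolding quad_form_def by simp
  also have "\<dots> = (\<Sum>j\<le>p. r j * quad_form (aQ j) v)"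
    by (rule quad_form_coeff_comb)
  also have "\<bar>\<dots>\<bar> \<le> (\<Sum>j\<le>p. \<epsilon> * (2 * \<Lambda> / \<delta>^2 * (norm v)^2))"
  proof (rule order_trans[OF sum_abs sum_mono])
    fix j assume j: "j \<in> {..p}"
    have Q: "\<bar>quad_form (aQ j) v\<bar> \<le> 2 * \<Lambda> / \<delta>^2 * (norm v)^2"
      using quad_form_bound_on_ball[OF \<delta> mfn_lagrange_bounded[OF lag LP]] j by simp
    have r: "\<bar>r j\<bar> \<le> \<epsilon>" and \<epsilon>: "0 \<le> \<epsilon>"
      using close j by (auto simp: r_def intro: order_trans[OF abs_ge_zero])
    show "\<bar>r j * quad_form (aQ j) v\<bar> \<le> \<epsilon> * (2 * \<Lambda> / \<delta>^2 * (norm v)^2)"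
      unfolding abs_mult by (rule mult_mono[OF r Q \<epsilon> abs_ge_zero])
  qed
  also have "\<dots> = 2 * \<Lambda> * real (p + 1) * \<epsilon> / \<delta>^2 * (norm v)^2"
    by simp
  finally show ?thesis .
qed

section \<open>Functions with Lipschitz gradient\<close>

lemma abs_diff_le_of_deriv_bound:
  fixes \<phi> \<phi>' :: "real \<Rightarrow> real"
  assumes deriv: "\<And>t. 0 \<le> t \<Longrightarrow> t \<le> 1 \<Longrightarrow> (\<phi> has_real_derivative \<phi>' t) (at t)"
    and bound: "\<And>t. 0 \<le> t \<Longrightarrow> t \<le> 1 \<Longrightarrow> \<bar>\<phi>' t\<bar> \<le> c * t"
  shows "\<bar>\<phi> 1 - \<phi> 0\<bar> \<le> c / 2"
proof -
  have "s * \<phi> 1 - c / 2 * 1^2 \<le> s * \<phi> 0 - c / 2 * 0^2" if s: "\<bar>s\<bar> = 1" for s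
  proof (rule DERIV_nonpos_imp_nonincreasing[where f = "\<lambda>t. s * \<phi> t - c / 2 * t^2"])
    fix t :: real assume t: "0 \<le> t" "t \<le> 1"
    have "((\<lambda>t. s * \<phi> t - c / 2 * t^2) has_real_derivative s * \<phi>' t - c * t) (at t)"
      by (auto intro!: derivative_eq_intros deriv[OF t])
    moreover have "s * \<phi>' t \<le> c * t"
      using bound[OF t] s by (metis abs_ge_self abs_mult mult_1 order_trans)
    ultimately show "\<exists>y. ((\<lambda>t. s * \<phi> t - c / 2 * t^2) has_real_derivative y) (at t) \<and> y \<le> 0"
      by force
  qed simp
  from this[of 1] this[of "-1"] have "\<phi> 1 - \<phi> 0 \<le> c / 2" "\<phi> 0 - \<phi> 1 \<le> c / 2"
    by simp_all
  then show ?thesis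
    by linarith
qed

lemma lipschitz_gradient_taylor_bound:
  fixes f :: "'a::real_inner \<Rightarrow> real" and gradf :: "'a \<Rightarrow> 'a"
  assumes grad: "\<forall>x\<in>X. (f has_derivative (\<lambda>h. gradf x \<bullet> h)) (at x)"
    and lip: "L-lipschitz_on X gradf"
    and S: "convex S" "S \<subseteq> X" "a \<in> S" "b \<in> S"
  shows "\<bar>f b - f a - gradf a \<bullet> (b - a)\<bar> \<le> L / 2 * (norm (b - a))^2"
proof -
  define d where "d = b - a"
  have seg: "a + t *\<^sub>R d \<in> X" if "0 \<le> t" "t \<le> 1" for t
    using S that convexD[OF S(1) S(3) S(4), of "1 - t" t] unfolding d_def
    by (auto simp: algebra_simps)
  have "\<bar>f (a + 1 *\<^sub>R d) - 1 * (gradf a \<bullet> d) - (f (a + 0 *\<^sub>R d) - 0 * (gradf a \<bullet> d))\<bar>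
      \<le> L * (norm d)^2 / 2"
  proof (rule abs_diff_le_of_deriv_bound[where \<phi> = "\<lambda>t. f (a + t *\<^sub>R d) - t * (gradf a \<bullet> d)"])
    fix t :: real assume t: "0 \<le> t" "t \<le> 1"
    have "((\<lambda>t. a + t *\<^sub>R d) has_derivative (\<lambda>s. s *\<^sub>R d)) (at t)"
      by (auto intro!: derivative_eq_intros)
    from has_derivative_compose[OF this] grad seg[OF t]
    have "((\<lambda>t. f (a + t *\<^sub>R d)) has_derivative (\<lambda>s. gradf (a + t *\<^sub>R d) \<bullet> (s *\<^sub>R d))) (at t)"
      by blast
    then show "((\<lambda>t. f (a + t *\<^sub>R d) - t * (gradf a \<bullet> d)) has_real_derivative
        (gradf (a + t *\<^sub>R d) - gradf a) \<bullet> d) (at t)"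
      unfolding has_field_derivative_def
      by (auto intro!: derivative_eq_intros simp: algebra_simps inner_diff_left)
    have "\<bar>(gradf (a + t *\<^sub>R d) - gradf a) \<bullet> d\<bar> \<le> norm (gradf (a + t *\<^sub>R d) - gradf a) * norm d"
      by (rule Cauchy_Schwarz_ineq2)
    also have "\<dots> \<le> L * norm (t *\<^sub>R d) * norm d"
      using lipschitz_onD[OF lip seg[OF t] seg[of 0]] by (simp add: dist_norm mult_right_mono)
    finally show "\<bar>(gradf (a + t *\<^sub>R d) - gradf a) \<bullet> d\<bar> \<le> L * (norm d)^2 * t"
      using t by (simp add: power2_eq_square mult_ac)
  qed
  then show ?thesis
    by (simp add: d_def algebra_simps)
qed

lemma relaxed_model_data_near_taylor:
  assumes lag: "\<forall>j\<le>p. mfn_lagrange_coeffs y p j (aL j) (aQ j)"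
    and grad: "\<forall>x\<in>X. (f has_derivative (\<lambda>h. gradf x \<bullet> h)) (at x)"
    and lip: "L-lipschitz_on X gradf"
    and ball: "cball (y 0) \<delta> \<subseteq> X" and Y: "\<forall>i\<le>p. y i \<in> cball (y 0) \<delta>"
    and relaxed: "\<forall>j\<le>p. \<bar>(\<Sum>i\<le>p. qpoly (aL i) (aQ i) (y j) * \<gamma> i) - f (y j)\<bar> \<le> \<kappa> * \<delta>^2"
    and j: "j \<le> p"
  shows "\<bar>\<gamma> j - (f (y 0) - gradf (y 0) \<bullet> y 0 + gradf (y 0) \<bullet> y j)\<bar> \<le> (\<kappa> + L / 2) * \<delta>^2"
proof -
  have "\<bar>\<gamma> j - f (y j)\<bar> \<le> \<kappa> * \<delta>^2"
    using relaxed[rule_format, OF j] by (simp add: sum_mfn_lagrange_interpolates[OF lag j])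
  moreover have "\<bar>f (y j) - f (y 0) - gradf (y 0) \<bullet> (y j - y 0)\<bar> \<le> L / 2 * (norm (y j - y 0))^2"
    using Y j ball by (intro lipschitz_gradient_taylor_bound[OF grad lip]) auto
  moreover have "L / 2 * (norm (y j - y 0))^2 \<le> L / 2 * \<delta>^2"
    using Y j lipschitz_on_nonneg[OF lip]
    by (intro mult_left_mono power_mono) (auto simp: dist_norm norm_minus_commute)
  ultimately show ?thesis
    unfolding distrib_right inner_diff_right by linarith
qed

lemma one_le_sqrt_div_min_inverse_powers:
  assumes "d > 0"
  shows "1 \<le> sqrt (2 * real (k + 1)) / (min 1 (min (1 / d) (1 / d^2)))^2"
proof -
  define c where "c = min 1 (min (1 / d) (1 / d^2))"
  have "0 < c" "c \<le> 1"
    using assms by (auto simp: c_def)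
  then have "0 < c^2" "c^2 \<le> 1"
    by (simp_all add: power_le_one)
  then show ?thesis
    unfolding c_def[symmetric] by (simp add: le_divide_eq order_trans[of _ 1])
qed

theorem theorem3:
  fixes f :: "real^'n \<Rightarrow> real"
    and gradf :: "real^'n \<Rightarrow> real^'n"
    and X :: "(real^'n) set"
    and y :: "nat \<Rightarrow> real^'n"
    and p :: nat and L \<delta> \<delta>max \<Lambda> \<kappa> :: real
    and \<gamma> :: "nat \<Rightarrow> real"
    and aL :: "nat \<Rightarrow> 'n option \<Rightarrow> real" and aQ :: "nat \<Rightarrow> 'n set \<Rightarrow> real"
  defines "n \<equiv> CARD('n)"
  defines "q \<equiv> (n^2 + 3*n) div 2"
  assumes X: "open X" "bounded X" "cball (y 0) \<delta> \<subseteq> X"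
    and grad: "\<forall>x\<in>X. (f has_derivative (\<lambda>h. gradf x \<bullet> h)) (at x)"
    and lip: "L-lipschitz_on X gradf"
    and pq: "n < p" "p < q"
    and \<delta>: "\<delta> > 0" "\<delta> \<le> \<delta>max"
    and Y: "\<forall>i\<le>p. y i \<in> cball (y 0) \<delta>"
    and poised: "mfn_poised y p"
    and Lpoised: "mfn_Lambda_poised y p \<Lambda> (cball (y 0) \<delta>)"
    and \<Lambda>: "\<Lambda> > 0"
    and \<kappa>: "\<kappa> \<ge> 0"
    and lag: "\<forall>j\<le>p. mfn_lagrange_coeffs y p j (aL j) (aQ j)"
    and relaxed: "\<forall>j\<le>p. \<bar>(\<Sum>i\<le>p. qpoly (aL i) (aQ i) (y j) * \<gamma> i) - f (y j)\<bar> \<le> \<kappa> * \<delta>^2"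
  shows "\<forall>x H. is_hessian (\<lambda>z. \<Sum>j\<le>p. qpoly (aL j) (aQ j) z * \<gamma> j) x H \<longrightarrow>
           onorm (\<lambda>v. H *v v) \<le> (\<kappa> + L/2) * (4 * \<Lambda> * real (p+1) * sqrt (2 * real (q+1)))
                 / (min 1 (min (1/\<delta>max) (1/\<delta>max^2)))^2"
proof (intro allI impI)
  fix x H
  assume hess: "is_hessian (\<lambda>z. \<Sum>j\<le>p. qpoly (aL j) (aQ j) z * \<gamma> j) x H"
  have L: "L \<ge> 0"
    using lip by (rule lipschitz_on_nonneg)
  have m: "(\<lambda>z. \<Sum>j\<le>p. qpoly (aL j) (aQ j) z * \<gamma> j) = qpoly (coeff_comb aL p \<gamma>) (coeff_comb aQ p \<gamma>)"
    by (simp add: fun_eq_iff qpoly_coeff_comb mult.commute)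
  have "\<forall>j\<le>p. \<bar>\<gamma> j - (f (y 0) - gradf (y 0) \<bullet> y 0 + gradf (y 0) \<bullet> y j)\<bar> \<le> (\<kappa> + L / 2) * \<delta>^2"
    using relaxed_model_data_near_taylor[OF lag grad lip X(3) Y relaxed] by blast
  from onorm_hessian_qpoly_le[OF hess[unfolded m]
      mfn_model_quad_form_bound[OF lag Lpoised \<delta>(1) this]]
  have "onorm (\<lambda>v. H *v v) \<le> 2 * (2 * \<Lambda> * real (p + 1) * ((\<kappa> + L / 2) * \<delta>^2) / \<delta>^2)" .
  also have "\<dots> = (\<kappa> + L / 2) * (4 * \<Lambda> * real (p + 1)) * 1"
    using \<delta> by simp
  also have "\<dots> \<le> (\<kappa> + L / 2) * (4 * \<Lambda> * real (p + 1))
      * (sqrt (2 * real (q + 1)) / (min 1 (min (1 / \<delta>max) (1 / \<delta>max^2)))^2)"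
    using \<delta> \<Lambda> \<kappa> L by (intro mult_left_mono one_le_sqrt_div_min_inverse_powers) auto
  finally show "onorm (\<lambda>v. H *v v) \<le> (\<kappa> + L / 2) * (4 * \<Lambda> * real (p + 1) * sqrt (2 * real (q + 1)))
      / (min 1 (min (1 / \<delta>max) (1 / \<delta>max^2)))^2"
    by (simp add: mult.assoc)
qed

end
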